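(* Let $p$ be a prime and $\alpha,l,n\in\mathbb{N}$. For $r\in\mathbb{Z}$ let $$T_l(n,r)=\frac{l!\,p^l}{\lfloor n/p^{\alpha-1}\rfloor!}\sum_{k\equiv r\ (\mathrm{mod}\ p^{\alpha})}\binom nk(-1)^k\binom{(k-r)/p^{\alpha}}l.$$ Then for all $r\in\mathbb{Z}$, $$\operatorname{ord}_p(T_l(n,r))\geqslant\tau_p\big(\{r\}_{p^{\alpha-1}},\{n-r\}_{p^{\alpha-1}}\big).$$
   Context: When $\alpha=0$, $\lfloor n/p^{-1}\rfloor=pn$. The sum runs over all integers $k\equiv r\pmod{p^\alpha}$, with $\binom nk=0$ unless $0\le k\le n$; $\binom xl=x(x-1)\cdots(x-l+1)/l!$. $\operatorname{ord}_p$ is the $p$-adic order. For an integer $a$ and positive real $m$, $\{a\}_m$ is the unique number in $[0,m)$ with $a-\{a\}_m\in m\mathbb{Z}$. $\tau_p(a,b)$ is the number of carries when adding $a,b\in\mathbb{N}$ in base $p$. *)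

theory Defs
  imports "HOL-Computational_Algebra.Computational_Algebra" "HOL-Number_Theory.Number_Theory"
begin

definition ord_rat :: "nat \<Rightarrow> rat \<Rightarrow> int" where
  "ord_rat p q = (case quotient_of q of (a, b) \<Rightarrow>
       int (multiplicity (int p) a) - int (multiplicity (int p) b))"

text \<open>Carry into position i when adding a and b in base p (carry 0 = 0).\<close>
fun carry :: "nat \<Rightarrow> nat \<Rightarrow> nat \<Rightarrow> nat \<Rightarrow> nat" where
  "carry p a b 0 = 0"
| "carry p a b (Suc i) = (a div p ^ i mod p + b div p ^ i mod p + carry p a b i) div p"

definition tau :: "nat \<Rightarrow> nat \<Rightarrow> nat \<Rightarrow> nat" where
  "tau p a b = card {i. carry p a b (Suc i) \<noteq> 0}"

text \<open>floor(n / p^(alpha-1)); for alpha = 0 this is p*n.\<close>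
definition flr :: "nat \<Rightarrow> nat \<Rightarrow> nat \<Rightarrow> nat" where
  "flr p \<alpha> n = (if \<alpha> = 0 then p * n else n div p ^ (\<alpha> - 1))"

text \<open>{a}_{p^(alpha-1)}; for alpha = 0 the modulus is 1/p and the residue of an integer is 0.\<close>
definition fracres :: "nat \<Rightarrow> nat \<Rightarrow> int \<Rightarrow> nat" where
  "fracres p \<alpha> a = (if \<alpha> = 0 then 0 else nat (a mod int (p ^ (\<alpha> - 1))))"

definition T :: "nat \<Rightarrow> nat \<Rightarrow> nat \<Rightarrow> nat \<Rightarrow> int \<Rightarrow> rat" where
  "T p \<alpha> l n r = (fact l * of_nat p ^ l / fact (flr p \<alpha> n)) *
     (\<Sum>k\<in>{k\<in>{0..n}. [int k = r] (mod int (p ^ \<alpha>))}.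
        of_nat (n choose k) * (-1) ^ k * ((of_int ((int k - r) div int (p ^ \<alpha>)) :: rat) gchoose l))"

end

(*
  T_l(n,r) = L_l((1 - x)^n) / floor(n / p^(alpha-1))! for the linear functional
  L_l(G) = sum_k [x^k]G [k = r mod m] p^l ((k - r)/m)_l, m = p^alpha, with (j)_l the falling
  factorial.  Multiplying G by 1 - x^m turns L_l into -p l L_(l-1), so a factor (1 - x^m)^K
  contributes p^K (l)_K, which is divisible by p^K K!.

  Let q = p^(alpha-1) and n = qN + s, and expand (1 - x)^n = (1 - x)^s ((1 - x^q) + E)^N binomially,
  where E = (1 - x)^q - (1 - x^q).  For the term with E^i:
  the factor (1 - x^q)^(N-i) contributes v_p((N-i)!), by reduction to modulus p and the same
  expansion with (1 - x)^p = (1 - x^p) + p(1 - x)w;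
  the coefficient of x^t in E^i is divisible by p^(v_p(i!) + d(t)), where the defect
  d(t) = alpha - 1 - v_p(t) measures how far t is from a multiple of q;
  by Kummer's theorem the coefficient of x^(c-t) in (1 - x)^s is divisible by p to the number of
  carries of (c - t) + (s - c + t), which is at least tau_p({r}, {n - r}) - d(t), because shifting
  a summand by t only affects the carries in the top d(t) of the alpha - 1 digit positions.
  With v_p(binom N i) this adds up to v_p(N!) + tau_p({r}, {n - r}), and N = floor(n/q).
*)

theory Submission
  imports Defs
begin

hide_const (open) UnivPoly.coeff UnivPoly.monom module.smult

section \<open>Falling factorials and factorial valuations\<close>

definition falling_fact :: "int \<Rightarrow> nat \<Rightarrow> int" where
  "falling_fact j l = (\<Prod>i<l. j - int i)"

lemma falling_fact_0 [simp]: "falling_fact j 0 = 1"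
  by (simp add: falling_fact_def)

lemma falling_fact_Suc: "falling_fact j (Suc l) = falling_fact j l * (j - int l)"
  by (simp add: falling_fact_def)

lemma falling_fact_Suc_shift: "falling_fact (j + 1) (Suc l) = (j + 1) * falling_fact j l"
  unfolding falling_fact_def prod.lessThan_Suc_shift by simp

lemma falling_fact_diff:
  "falling_fact (j + 1) (Suc l) - falling_fact j (Suc l) = int (Suc l) * falling_fact j l"
  using falling_fact_Suc_shift[of j l] falling_fact_Suc[of j l] by (simp add: algebra_simps)

lemma falling_fact_of_nat: "falling_fact (int l) K = int (l choose K) * fact K"
proof (induction K arbitrary: l)
  case 0
  then show ?case by simp
next
  case (Suc K)
  show ?case
  proof (cases l)
    case 0
    then show ?thesis by (auto simp: falling_fact_def)
  next
    case (Suc l')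
    have "falling_fact (int l) (Suc K) = (int l' + 1) * (int (l' choose K) * fact K)"
      using falling_fact_Suc_shift[of "int l'" K] Suc.IH Suc by (simp add: add.commute)
    also have "\<dots> = int (Suc l' * (l' choose K)) * fact K"
      by (simp add: algebra_simps)
    also have "Suc l' * (l' choose K) = Suc K * (Suc l' choose Suc K)"
      by (rule Suc_times_binomial[symmetric])
    finally show ?thesis
      using Suc by (simp add: algebra_simps)
  qed
qed

lemma fact_mult_gbinomial:
  "fact l * (of_int j gchoose l) = (of_int (falling_fact j l) :: 'a :: field_char_0)"
  by (simp add: gbinomial_prod_rev falling_fact_def atLeast0LessThan)

definition vfact :: "nat \<Rightarrow> nat \<Rightarrow> nat" where
  "vfact p n = multiplicity (int p) (fact n :: int)"

lemma vfact_0 [simp]: "vfact p 0 = 0"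
  by (simp add: vfact_def)

lemma vfact_Suc:
  assumes "prime p"
  shows "vfact p (Suc n) = vfact p n + multiplicity (int p) (int (Suc n))"
proof -
  have "(fact (Suc n) :: int) = int (Suc n) * fact n"
    by (simp add: fact_Suc)
  then show ?thesis
    unfolding vfact_def using assms
    by (simp add: prime_elem_multiplicity_mult_distrib)
qed

lemma vfact_rec:
  assumes "prime p"
  shows "vfact p n = n div p + vfact p (n div p)"
proof (induction n)
  case 0
  then show ?case by simp
next
  case (Suc n)
  have p1: "p > 1"
    using assms prime_gt_1_nat by blast
  show ?case
  proof (cases "p dvd Suc n")
    case True
    then obtain t where t: "Suc n = p * t" ..
    then have "t > 0"
      by (cases t) auto
    have "Suc n div p = t"
      using t p1 by simp
    moreover have "Suc n div p = Suc (n div p)"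
      using True by (simp add: div_Suc dvd_eq_mod_eq_0)
    ultimately have "n div p = t - 1" "Suc n div p = t"
      by simp_all
    moreover have "multiplicity (int p) (int (Suc n)) = Suc (multiplicity (int p) (int t))"
      unfolding t of_nat_mult using \<open>t > 0\<close> p1 by (simp add: multiplicity_times_same)
    moreover have "vfact p t = vfact p (t - 1) + multiplicity (int p) (int t)"
      using vfact_Suc[OF assms, of "t - 1"] \<open>t > 0\<close> by simp
    ultimately show ?thesis
      using Suc.IH vfact_Suc[OF assms, of n] \<open>t > 0\<close> by simp
  next
    case False
    then have "multiplicity (int p) (int (Suc n)) = 0"
      by (intro not_dvd_imp_multiplicity_0) (metis int_dvd_int_iff)
    then show ?thesis
      using False Suc.IH vfact_Suc[OF assms, of n] by (simp add: div_Suc dvd_eq_mod_eq_0)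
  qed
qed

lemma vfact_binomial:
  assumes "prime p" "i \<le> n"
  shows "vfact p n = multiplicity (int p) (int (n choose i)) + vfact p i + vfact p (n - i)"
proof -
  have "(fact n :: int) = int (n choose i) * (fact i * fact (n - i))"
    using binomial_fact_lemma[OF assms(2)] by (metis mult.commute of_nat_fact of_nat_mult)
  then show ?thesis
    unfolding vfact_def using assms by (simp add: prime_elem_multiplicity_mult_distrib)
qed

lemma vfact_le:
  assumes "prime p" "n \<ge> 1"
  shows "vfact p n \<le> n - 1"
  using assms(2)
proof (induction n rule: less_induct)
  case (less n)
  have p1: "p > 1"
    using assms prime_gt_1_nat by blast
  show ?case
  proof (cases "n div p = 0")
    case True
    then show ?thesis
      using vfact_rec[OF assms(1), of n] by simp
  next
    case False
    have "vfact p (n div p) \<le> n div p - 1"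
      using less.IH[of "n div p"] less.prems p1 False by simp
    moreover have "2 * (n div p) \<le> n"
    proof -
      have "2 * (n div p) \<le> p * (n div p)"
        using p1 by simp
      also have "\<dots> \<le> n"
        by simp
      finally show ?thesis .
    qed
    ultimately show ?thesis
      using vfact_rec[OF assms(1), of n] False by linarith
  qed
qed

lemma vfact_eq_sum_div_power:
  assumes "prime p" "n < p ^ K"
  shows "vfact p n = (\<Sum>i<K. n div p ^ Suc i)"
  using assms(2)
proof (induction K arbitrary: n)
  case 0
  then show ?case by simp
next
  case (Suc K)
  have "n div p < p ^ K"
    using Suc.prems prime_gt_1_nat[OF assms(1)] by (simp add: div_less_iff_less_mult mult.commute)
  then have "vfact p (n div p) = (\<Sum>i<K. n div p ^ Suc (Suc i))"
    using Suc.IH by (simp add: div_mult2_eq)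
  moreover have "(\<Sum>i<Suc K. n div p ^ Suc i) = n div p + (\<Sum>i<K. n div p ^ Suc (Suc i))"
    unfolding sum.lessThan_Suc_shift by simp
  ultimately show ?case
    using vfact_rec[OF assms(1), of n] by simp
qed

section \<open>Carries\<close>

lemma carry_eq:
  assumes "p > 0"
  shows "carry p a b i = (a mod p ^ i + b mod p ^ i) div p ^ i"
proof (induction i)
  case 0
  then show ?case by simp
next
  case (Suc i)
  let ?P = "p ^ i"
  have "x mod p ^ Suc i = ?P * (x div ?P mod p) + x mod ?P" for x
    by (metis mod_mult2_eq power_Suc2)
  then have "a mod p ^ Suc i + b mod p ^ Suc i
      = (a mod ?P + b mod ?P) + ?P * (a div ?P mod p + b div ?P mod p)"
    by (simp add: algebra_simps)
  then have "(a mod p ^ Suc i + b mod p ^ Suc i) div p ^ Suc i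
      = ((a mod ?P + b mod ?P) + ?P * (a div ?P mod p + b div ?P mod p)) div ?P div p"
    by (metis div_mult2_eq power_Suc2)
  also have "\<dots> = (a div ?P mod p + b div ?P mod p + (a mod ?P + b mod ?P) div ?P) div p"
    using assms by simp
  finally show ?case
    using Suc.IH by simp
qed

lemma carry_eq_0:
  assumes "p > 0" "a + b < p ^ K" "K \<le> i"
  shows "carry p a b i = 0"
proof -
  have "p ^ K \<le> p ^ i"
    using assms by (intro power_increasing) auto
  moreover have "a mod p ^ i + b mod p ^ i \<le> a + b"
    by (simp add: add_mono)
  ultimately have "a mod p ^ i + b mod p ^ i < p ^ i"
    using assms(2) by linarith
  then show ?thesis
    using assms(1) by (simp add: carry_eq)
qed

lemma carries_subset:
  assumes "p > 0" "a + b < p ^ K"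
  shows "{i. carry p a b (Suc i) \<noteq> 0} \<subseteq> {..<K}"
proof
  fix i
  assume "i \<in> {i. carry p a b (Suc i) \<noteq> 0}"
  then show "i \<in> {..<K}"
    using carry_eq_0[OF assms, of "Suc i"] by (cases "K \<le> Suc i") auto
qed

lemma less_power_self: "(p::nat) > 1 \<Longrightarrow> n < p ^ n"
  using less_exp[of n] power_mono[of 2 p n] by linarith

lemma finite_carries:
  assumes "p > 1"
  shows "finite {i. carry p a b (Suc i) \<noteq> 0}"
proof (rule finite_subset)
  show "{i. carry p a b (Suc i) \<noteq> 0} \<subseteq> {..<a + b}"
    using assms by (intro carries_subset less_power_self) auto
qed simp

lemma tau_0_0: "tau p 0 0 = 0"
proof -
  have "carry p 0 0 i = 0" for i
    by (induction i) simp_all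
  then show ?thesis
    by (simp add: tau_def)
qed

lemma tau_le_multiplicity_binomial:
  assumes "prime p"
  shows "tau p a b \<le> multiplicity (int p) (int ((a + b) choose a))"
proof -
  have p1: "p > 1"
    using assms prime_gt_1_nat by blast
  define K where "K = a + b"
  have K: "a + b < p ^ K" "a < p ^ K" "b < p ^ K"
    unfolding K_def using less_power_self[OF p1, of "a + b"] by linarith+
  have "(a + b) div p ^ Suc i = a div p ^ Suc i + b div p ^ Suc i + carry p a b (Suc i)" for i
    using p1 carry_eq[of p a b "Suc i"] div_add1_eq[of a b "p ^ Suc i"] by simp
  then have "vfact p (a + b) = vfact p a + vfact p b + (\<Sum>i<K. carry p a b (Suc i))"
    unfolding vfact_eq_sum_div_power[OF assms K(1)] vfact_eq_sum_div_power[OF assms K(2)]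
      vfact_eq_sum_div_power[OF assms K(3)]
    by (simp only: sum.distrib)
  then have "multiplicity (int p) (int ((a + b) choose a)) = (\<Sum>i<K. carry p a b (Suc i))"
    using vfact_binomial[OF assms, of a "a + b"] by simp
  moreover have "tau p a b \<le> (\<Sum>i\<in>{i. carry p a b (Suc i) \<noteq> 0}. carry p a b (Suc i))"
    unfolding tau_def card_eq_sum by (intro sum_mono) auto
  moreover have "\<dots> \<le> (\<Sum>i<K. carry p a b (Suc i))"
    using carries_subset[OF _ K(1)] p1 by (intro sum_mono2) auto
  ultimately show ?thesis
    by simp
qed

lemma tau_le_tau_cong:
  assumes "p > 1" "[a = a'] (mod p ^ k)" "[b = b'] (mod p ^ k)" "a + b < p ^ Suc e"
  shows "tau p a b \<le> tau p a' b' + (e - k)"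
proof -
  have same: "carry p a b i = carry p a' b' i" if "i \<le> k" for i
  proof -
    have "p ^ i dvd p ^ k"
      using that by (rule le_imp_power_dvd)
    then have "[a = a'] (mod p ^ i)" "[b = b'] (mod p ^ i)"
      using assms(2,3) by (auto intro: cong_dvd_modulus_nat)
    then show ?thesis
      using assms(1) by (simp add: carry_eq cong_def)
  qed
  have "{i. carry p a b (Suc i) \<noteq> 0}
      \<subseteq> {i. carry p a' b' (Suc i) \<noteq> 0} \<union> {k..<e}"
  proof
    fix i
    assume i: "i \<in> {i. carry p a b (Suc i) \<noteq> 0}"
    then have "i < e"
      using carry_eq_0[OF _ assms(4), of "Suc i"] assms(1) by (cases "Suc e \<le> Suc i") auto
    then show "i \<in> {i. carry p a' b' (Suc i) \<noteq> 0} \<union> {k..<e}"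
      using i same[of "Suc i"] by (cases "Suc i \<le> k") auto
  qed
  moreover have "finite {i. carry p a' b' (Suc i) \<noteq> 0}"
    using assms(1) by (rule finite_carries)
  ultimately have "tau p a b \<le> card ({i. carry p a' b' (Suc i) \<noteq> 0} \<union> {k..<e})"
    unfolding tau_def by (intro card_mono) auto
  also have "\<dots> \<le> tau p a' b' + (e - k)"
    unfolding tau_def using card_Un_le[of _ "{k..<e}"] by simp
  finally show ?thesis .
qed

definition defect :: "nat \<Rightarrow> nat \<Rightarrow> nat \<Rightarrow> nat" where
  "defect p e t = (if t = 0 then 0 else e - multiplicity (int p) (int t))"

lemma defect_le: "defect p e t \<le> e"
  by (simp add: defect_def)

lemma defect_le_iff:
  assumes "prime p"
  shows "defect p e t \<le> d \<longleftrightarrow> p ^ (e - d) dvd t"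
proof (cases "t = 0")
  case False
  have "p ^ (e - d) dvd t \<longleftrightarrow> int p ^ (e - d) dvd int t"
    by (metis of_nat_power int_dvd_int_iff)
  also have "\<dots> \<longleftrightarrow> e - d \<le> multiplicity (int p) (int t)"
    using False assms by (intro power_dvd_iff_le_multiplicity) auto
  finally show ?thesis
    using False by (auto simp: defect_def)
qed (simp add: defect_def)

lemma power_defect_dvd: "prime p \<Longrightarrow> p ^ (e - defect p e t) dvd t"
  using defect_le_iff by blast

lemma defect_add_le:
  assumes "prime p"
  shows "defect p e (t + t') \<le> max (defect p e t) (defect p e t')"
  using defect_le_iff[OF assms] by (meson dvd_add max.cobounded1 max.cobounded2)

text \<open>Adding \<open>t\<close> to one summand modulo \<open>p ^ e\<close> creates at most \<open>defect p e t\<close> new carries.\<close>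

lemma tau_le_tau_defect:
  assumes "prime p" "a < p ^ e" "b < p ^ e" "(a + b) mod p ^ e = s" "d \<le> s"
    "(t + d) mod p ^ e = a"
  shows "tau p a b \<le> tau p d (s - d) + defect p e t"
proof -
  define k where "k = e - defect p e t"
  have k: "p ^ k dvd p ^ e" "p ^ k dvd t" "defect p e t = e - k"
    unfolding k_def using power_defect_dvd[OF assms(1)] defect_le[of p e t]
    by (auto intro: le_imp_power_dvd)
  have "[t + d = a] (mod p ^ e)"
    using assms(6) by (auto simp: cong_def)
  then have "[t + d = a] (mod p ^ k)"
    using k(1) by (rule cong_dvd_modulus_nat)
  moreover have "[t + d = d] (mod p ^ k)"
    using k(2) by (auto simp: cong_def elim!: dvdE)
  ultimately have ad: "[a = d] (mod p ^ k)"
    by (metis cong_sym cong_trans)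
  have "[a + b = d + (s - d)] (mod p ^ e)"
    using assms(4,5) by (auto simp: cong_def)
  then have "[a + b = d + (s - d)] (mod p ^ k)"
    using k(1) by (rule cong_dvd_modulus_nat)
  then have "[d + b = d + (s - d)] (mod p ^ k)"
    using ad by (metis cong_add cong_refl cong_sym cong_trans)
  then have "[b = s - d] (mod p ^ k)"
    by (simp only: cong_add_lcancel_nat)
  moreover have "a + b < p ^ Suc e"
  proof -
    have "a + b < 2 * p ^ e"
      using assms(2,3) by simp
    also have "\<dots> \<le> p ^ Suc e"
      using prime_ge_2_nat[OF assms(1)] by simp
    finally show ?thesis .
  qed
  ultimately show ?thesis
    using tau_le_tau_cong[OF _ ad] prime_gt_1_nat[OF assms(1)] k(3) by simp
qed

section \<open>The error term of the Frobenius congruence\<close>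

lemma one_minus_monom_power:
  "(1 - monom 1 q) ^ K = (\<Sum>i\<le>K. monom ((-1) ^ i * int (K choose i)) (q * i) :: int poly)"
proof -
  have "(1 - monom 1 q :: int poly) ^ K = (monom (-1) q + 1) ^ K"
    by (simp add: minus_monom[symmetric])
  also have "\<dots> = (\<Sum>i\<le>K. of_nat (K choose i) * monom (-1) q ^ i * 1 ^ (K - i))"
    by (rule binomial_ring)
  also have "\<dots> = (\<Sum>i\<le>K. monom ((-1) ^ i * int (K choose i)) (q * i))"
    by (intro sum.cong refl) (simp add: monom_power of_nat_poly smult_monom mult.commute)
  finally show ?thesis .
qed

lemma coeff_one_minus_x_power:
  "coeff ((1 - monom 1 1) ^ K :: int poly) n = (if n \<le> K then (-1) ^ n * int (K choose n) else 0)"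
  by (simp add: one_minus_monom_power coeff_sum)

lemma defect_le_multiplicity_binomial:
  assumes "prime p" "0 < t" "t \<le> p ^ e"
  shows "defect p e t \<le> multiplicity (int p) (int (p ^ e choose t))"
proof -
  obtain k n where kn: "t = Suc k" "p ^ e = Suc n"
    using assms(2) prime_gt_0_nat[OF assms(1)] by (metis gr0_implies_Suc zero_less_power)
  then have eq: "int t * int (p ^ e choose t) = int p ^ e * int (n choose k)"
    by (metis Suc_times_binomial of_nat_mult of_nat_power)
  have nz1: "int (p ^ e choose t) \<noteq> 0"
    using assms(3) by simp
  have nz2: "int (n choose k) \<noteq> 0"
    using assms(3) kn by simp
  have pe: "prime_elem (int p)"
    using assms(1) by simp
  have "multiplicity (int p) (int t) + multiplicity (int p) (int (p ^ e choose t))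
      = multiplicity (int p) (int p ^ e * int (n choose k))"
    using pe nz1 assms(2) by (simp add: prime_elem_multiplicity_mult_distrib flip: eq)
  also have "\<dots> = e + multiplicity (int p) (int (n choose k))"
    using pe nz2 by (simp add: prime_elem_multiplicity_mult_distrib prime_elem_multiplicity_power_distrib)
  finally show ?thesis
    using assms(2) by (simp add: defect_def)
qed

lemma prime_dvd_neg_one_power_prime_power:
  assumes "prime p"
  shows "int p dvd (-1) ^ (p ^ e) + 1"
proof (cases "even (p ^ e)")
  case True
  then have "\<not> p > 2"
    using prime_odd_nat[OF assms] by auto
  then have "p = 2"
    using prime_ge_2_nat[OF assms] by linarith
  then show ?thesis
    using True by simp
qed simp

definition frobenius_error :: "nat \<Rightarrow> int poly" where
  "frobenius_error q = (1 - monom 1 1) ^ q - (1 - monom 1 q)"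

lemma coeff_frobenius_error_dvd:
  assumes "prime p"
  shows "int p ^ max 1 (defect p e t) dvd coeff (frobenius_error (p ^ e)) t"
proof -
  define q where "q = p ^ e"
  have q1: "q \<ge> 1"
    unfolding q_def using prime_gt_0_nat[OF assms] by simp
  have c: "coeff (frobenius_error q) t = (if t \<le> q then (-1) ^ t * int (q choose t) else 0)
      - ((if t = 0 then 1 else 0) - (if t = q then 1 else 0))"
    unfolding frobenius_error_def coeff_diff coeff_one_minus_x_power by (simp add: coeff_monom)
  consider "t = 0" | "0 < t" "t < q" | "t = q" | "q < t"
    by linarith
  then have "int p ^ max 1 (defect p e t) dvd coeff (frobenius_error q) t"
  proof cases
    case 1
    then show ?thesis
      using c q1 by simp
  next
    case 2
    then have "\<not> defect p e t \<le> 0"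
      using defect_le_iff[OF assms, of e t 0] by (auto simp: q_def dest: dvd_imp_le)
    moreover have "defect p e t \<le> multiplicity (int p) (int (q choose t))"
      using defect_le_multiplicity_binomial[OF assms, of t e] 2 by (simp add: q_def)
    ultimately have "int p ^ max 1 (defect p e t) dvd int (q choose t)"
      by (intro multiplicity_dvd') simp
    then show ?thesis
      using c 2 by simp
  next
    case 3
    have "int p dvd (-1) ^ q + 1"
      unfolding q_def by (rule prime_dvd_neg_one_power_prime_power[OF assms])
    moreover have "defect p e t = 0"
      using 3 defect_le_iff[OF assms, of e t 0] by (simp add: q_def)
    ultimately show ?thesis
      using c 3 q1 by simp
  next
    case 4
    then show ?thesis
      using c by simp
  qed
  then show ?thesis
    unfolding q_def .
qed

lemma frobenius_error_prime:
  assumes "prime p"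
  obtains w where "frobenius_error p = smult (int p) ((1 - monom 1 1) * w)"
proof -
  have "int p dvd coeff (frobenius_error p) t" for t
    using coeff_frobenius_error_dvd[OF assms, of 1 t] le_imp_power_dvd[of 1 "max 1 (defect p 1 t)" "int p"]
    by (simp add: dvd_trans)
  then obtain D where D: "frobenius_error p = [:int p:] * D"
    by (metis const_poly_dvd_iff dvdE)
  have "poly (frobenius_error p) 1 = 0"
    using prime_gt_0_nat[OF assms] by (simp add: frobenius_error_def poly_monom)
  then have "poly D 1 = 0"
    using D prime_gt_0_nat[OF assms] by simp
  then obtain w0 where w0: "D = [:-1, 1:] * w0"
    by (auto simp: poly_eq_0_iff_dvd)
  have "[:-1, 1:] = - (1 - monom 1 1 :: int poly)"
    by (simp add: monom_altdef one_pCons)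
  then have "D = (1 - monom 1 1) * - w0"
    using w0 by (metis mult_minus_left mult_minus_right)
  then have "frobenius_error p = smult (int p) ((1 - monom 1 1) * - w0)"
    using D by simp
  then show ?thesis
    by (rule that)
qed

lemma coeff_frobenius_error_power_Suc_dvd:
  assumes "prime p"
  shows "int p ^ (i + max 1 (defect p e j)) dvd coeff (frobenius_error (p ^ e) ^ Suc i) j"
proof (induction i arbitrary: j)
  case 0
  then show ?case
    using coeff_frobenius_error_dvd[OF assms] by simp
next
  case (Suc i)
  let ?E = "frobenius_error (p ^ e)"
  have "int p ^ (Suc i + max 1 (defect p e j)) dvd coeff ?E t * coeff (?E ^ Suc i) (j - t)"
    if "t \<le> j" for t
  proof -
    have "defect p e j \<le> max (defect p e t) (defect p e (j - t))"
      using defect_add_le[OF assms, of e t "j - t"] that by simp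
    then have "Suc i + max 1 (defect p e j) \<le> max 1 (defect p e t) + (i + max 1 (defect p e (j - t)))"
      by (simp add: max_def split: if_splits)
    moreover have "int p ^ (max 1 (defect p e t) + (i + max 1 (defect p e (j - t))))
        dvd coeff ?E t * coeff (?E ^ Suc i) (j - t)"
      unfolding power_add[of "int p" "max 1 _"]
      by (intro mult_dvd_mono coeff_frobenius_error_dvd[OF assms] Suc.IH)
    ultimately show ?thesis
      by (meson le_imp_power_dvd dvd_trans)
  qed
  then show ?case
    unfolding power_Suc[of ?E "Suc i"] coeff_mult by (intro dvd_sum) simp
qed

lemma coeff_frobenius_error_power_dvd:
  assumes "prime p"
  shows "int p ^ (vfact p i + defect p e t) dvd coeff (frobenius_error (p ^ e) ^ i) t"
proof (cases i)
  case 0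
  then show ?thesis
    by (cases "t = 0") (simp_all add: defect_def)
next
  case (Suc i')
  have "vfact p i + defect p e t \<le> i' + max 1 (defect p e t)"
    using vfact_le[OF assms, of i] Suc by simp
  then show ?thesis
    using Suc coeff_frobenius_error_power_Suc_dvd[OF assms, of i' e t]
    by (meson le_imp_power_dvd dvd_trans)
qed

lemma coeff_frobenius_error_power_mult_dvd:
  assumes "prime p" "a < p ^ e" "b < p ^ e" "(a + b) mod p ^ e = s" "c mod p ^ e = a"
  shows "int p ^ (vfact p i + tau p a b) dvd
    coeff (frobenius_error (p ^ e) ^ i * (1 - monom 1 1) ^ s) c"
proof -
  have "int p ^ (vfact p i + tau p a b) dvd
      coeff (frobenius_error (p ^ e) ^ i) t * coeff ((1 - monom 1 1) ^ s) (c - t)"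
    if "t \<le> c" for t
  proof (cases "c - t \<le> s")
    case True
    let ?m = "multiplicity (int p) (int (s choose (c - t)))"
    have "tau p a b \<le> tau p (c - t) (s - (c - t)) + defect p e t"
      using tau_le_tau_defect[OF assms(1-4) True] assms(5) that by simp
    moreover have "tau p (c - t) (s - (c - t)) \<le> ?m"
      using tau_le_multiplicity_binomial[OF assms(1), of "c - t" "s - (c - t)"] True by simp
    ultimately have "vfact p i + tau p a b \<le> (vfact p i + defect p e t) + ?m"
      by simp
    moreover have "int p ^ ((vfact p i + defect p e t) + ?m)
        dvd coeff (frobenius_error (p ^ e) ^ i) t * coeff ((1 - monom 1 1) ^ s) (c - t)"
      unfolding power_add[of "int p" "vfact p i + defect p e t"] coeff_one_minus_x_power
      using True
      by (intro mult_dvd_mono coeff_frobenius_error_power_dvd[OF assms(1)]) (simp add: multiplicity_dvd)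
    ultimately show ?thesis
      by (meson le_imp_power_dvd dvd_trans)
  next
    case False
    then show ?thesis
      unfolding coeff_one_minus_x_power by simp
  qed
  then show ?thesis
    unfolding coeff_mult by (intro dvd_sum) simp
qed

section \<open>Weighted coefficient sums\<close>

definition weight :: "nat \<Rightarrow> nat \<Rightarrow> nat \<Rightarrow> int \<Rightarrow> nat \<Rightarrow> int" where
  "weight p m l r k =
    (if [int k = r] (mod int m) then int p ^ l * falling_fact ((int k - r) div int m) l else 0)"

definition wsum :: "nat \<Rightarrow> nat \<Rightarrow> nat \<Rightarrow> int \<Rightarrow> int poly \<Rightarrow> int" where
  "wsum p m l r G = (\<Sum>k\<le>degree G. coeff G k * weight p m l r k)"

lemma wsum_eq_sum_atMost:
  "degree G \<le> D \<Longrightarrow> wsum p m l r G = (\<Sum>k\<le>D. coeff G k * weight p m l r k)"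
  unfolding wsum_def by (intro sum.mono_neutral_left) (auto simp: coeff_eq_0)

lemma wsum_0 [simp]: "wsum p m l r 0 = 0"
  by (simp add: wsum_def)

lemma wsum_add: "wsum p m l r (G + H) = wsum p m l r G + wsum p m l r H"
proof -
  let ?D = "max (degree G) (degree H)"
  have "degree (G + H) \<le> ?D"
    by (rule degree_add_le_max)
  then show ?thesis
    by (simp add: wsum_eq_sum_atMost[of _ ?D] sum.distrib algebra_simps)
qed

lemma wsum_smult: "wsum p m l r (smult c G) = c * wsum p m l r G"
  by (simp add: wsum_eq_sum_atMost[of "smult c G" "degree G"] wsum_def sum_distrib_left algebra_simps)

lemma wsum_of_nat_mult: "wsum p m l r (of_nat c * G) = int c * wsum p m l r G"
  by (simp add: of_nat_poly wsum_smult)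

lemma wsum_diff: "wsum p m l r (G - H) = wsum p m l r G - wsum p m l r H"
  using wsum_add[of p m l r G "smult (-1) H"] wsum_smult[of p m l r "-1" H] by simp

lemma wsum_sum: "wsum p m l r (\<Sum>i\<in>A. F i) = (\<Sum>i\<in>A. wsum p m l r (F i))"
  by (induction A rule: infinite_finite_induct) (simp_all add: wsum_add)

lemma weight_add: "weight p m l r (k + c) = weight p m l (r - int c) k"
proof -
  have "[int (k + c) = r] (mod int m) \<longleftrightarrow> [int k = r - int c] (mod int m)"
    by (metis add_diff_cancel_right' cong_add_rcancel diff_add_cancel of_nat_add)
  then show ?thesis
    by (simp add: weight_def algebra_simps)
qed

lemma wsum_monom_mult: "wsum p m l r (monom 1 c * G) = wsum p m l (r - int c) G"
proof -
  let ?D = "degree G"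
  have "degree (monom 1 c * G) \<le> ?D + c"
    by (metis add.commute degree_monom_le degree_mult_le order_trans add_le_mono1)
  then have "wsum p m l r (monom 1 c * G) = (\<Sum>k\<le>?D + c. coeff (monom 1 c * G) k * weight p m l r k)"
    by (rule wsum_eq_sum_atMost)
  also have "\<dots> = (\<Sum>k\<in>{0 + c..?D + c}. coeff (monom 1 c * G) k * weight p m l r k)"
    by (intro sum.mono_neutral_right) (auto simp: coeff_monom_mult)
  also have "\<dots> = (\<Sum>k\<le>?D. coeff G k * weight p m l (r - int c) k)"
    unfolding sum.shift_bounds_cl_nat_ivl by (intro sum.cong) (auto simp: coeff_monom_mult weight_add)
  finally show ?thesis
    by (simp add: wsum_def)
qed

lemma wsum_mult: "wsum p m l r (G * H) = (\<Sum>c\<le>degree G. coeff G c * wsum p m l (r - int c) H)"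
proof -
  have "G * H = (\<Sum>c\<le>degree G. smult (coeff G c) (monom 1 c * H))"
    by (subst poly_as_sum_of_monoms[symmetric, of G])
      (simp add: sum_distrib_right smult_monom flip: mult_smult_left)
  then show ?thesis
    by (simp add: wsum_sum wsum_smult wsum_monom_mult)
qed

lemma wsum_monom: "wsum p m l r (monom 1 c) = weight p m l r c"
  using wsum_monom_mult[of p m l r c 1] weight_add[of p m l r 0 c] by (simp add: wsum_def)

lemma weight_diff:
  assumes "m > 0"
  shows "weight p m l (r - int m) k - weight p m l r k = int p * int l * weight p m (l - 1) r k"
proof -
  have "[int k = r - int m] (mod int m) \<longleftrightarrow> [int k = r] (mod int m)"
    by (simp add: cong_def mod_diff_right_eq[symmetric])
  moreover have "(int k - (r - int m)) div int m = (int k - r) div int m + 1"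
    using assms div_add_self2[of "int m" "int k - r"] by (simp add: algebra_simps)
  moreover have "int p ^ l * falling_fact (j + 1) l - int p ^ l * falling_fact j l
      = int p * int l * (int p ^ (l - 1) * falling_fact j (l - 1))" for j
  proof (cases l)
    case (Suc l')
    then have "int p ^ l * falling_fact (j + 1) l - int p ^ l * falling_fact j l
        = int p ^ l * (int l * falling_fact j l')"
      by (metis falling_fact_diff right_diff_distrib)
    then show ?thesis
      using Suc by (simp add: mult.assoc mult.left_commute)
  qed simp
  ultimately show ?thesis
    by (simp add: weight_def)
qed

text \<open>Multiplying by \<open>1 - x ^ m\<close> acts on the weights like a difference operator in \<open>(k - r) / m\<close>.\<close>

lemma wsum_one_minus_monom_mult:
  assumes "m > 0"
  shows "wsum p m l r ((1 - monom 1 m) * H) = - (int p * int l) * wsum p m (l - 1) r H"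
proof -
  have "(1 - monom 1 m) * H = H - monom 1 m * H"
    by (simp add: algebra_simps)
  then have "wsum p m l r ((1 - monom 1 m) * H) = wsum p m l r H - wsum p m l (r - int m) H"
    by (simp add: wsum_diff wsum_monom_mult)
  also have "\<dots> = - (\<Sum>k\<le>degree H. coeff H k * (weight p m l (r - int m) k - weight p m l r k))"
    by (simp add: wsum_def sum_subtractf algebra_simps)
  also have "\<dots> = - (int p * int l) * wsum p m (l - 1) r H"
    by (simp add: weight_diff[OF assms] wsum_def sum_distrib_left sum_negf algebra_simps)
  finally show ?thesis .
qed

lemma wsum_one_minus_monom_power_mult:
  assumes "m > 0"
  shows "wsum p m l r ((1 - monom 1 m) ^ K * H)
    = (- int p) ^ K * falling_fact (int l) K * wsum p m (l - K) r H"
proof (induction K arbitrary: l)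
  case 0
  then show ?case by simp
next
  case (Suc K)
  have "wsum p m l r ((1 - monom 1 m) ^ Suc K * H)
      = - (int p * int l) * ((- int p) ^ K * falling_fact (int (l - 1)) K * wsum p m (l - 1 - K) r H)"
    by (simp add: wsum_one_minus_monom_mult[OF assms] Suc.IH mult.assoc)
  also have "\<dots> = (- int p) ^ Suc K * falling_fact (int l) (Suc K) * wsum p m (l - Suc K) r H"
  proof (cases l)
    case 0
    then show ?thesis
      by (auto simp: falling_fact_def)
  next
    case (Suc l')
    then show ?thesis
      using falling_fact_Suc_shift[of "int l'" K] by (simp add: algebra_simps)
  qed
  finally show ?case .
qed

lemma wsum_one_minus_monom_power:
  "wsum p m l r ((1 - monom 1 q) ^ K) = (\<Sum>i\<le>K. (-1) ^ i * int (K choose i) * weight p m l r (q * i))"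
proof -
  have "(1 - monom 1 q) ^ K = (\<Sum>i\<le>K. smult ((-1) ^ i * int (K choose i)) (monom 1 (q * i)))"
    by (simp add: one_minus_monom_power smult_monom)
  then show ?thesis
    by (simp add: wsum_sum wsum_smult wsum_monom)
qed

lemma wsum_one_minus_monom_power_rescale:
  assumes "q > 0" "p > 0"
  shows "wsum p (p * q) l r ((1 - monom 1 q) ^ K) =
    (if int q dvd r then wsum p p l (r div int q) ((1 - monom 1 1) ^ K) else 0)"
proof (cases "int q dvd r")
  case True
  then obtain r' where r: "r = int q * r'" ..
  have "weight p (p * q) l r (q * i) = weight p p l r' i" for i
  proof -
    have "[int (q * i) = r] (mod int (p * q)) \<longleftrightarrow> [int i = r'] (mod int p)"
      unfolding r cong_def using assms by (simp add: mult.commute[of p q] mult_mod_right[symmetric])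
    moreover have "(int (q * i) - r) div int (p * q) = (int i - r') div int p"
      unfolding r using assms by (simp add: mult.commute[of p q] right_diff_distrib[symmetric])
    ultimately show ?thesis
      by (simp add: weight_def)
  qed
  then show ?thesis
    using True r assms by (simp add: wsum_one_minus_monom_power)
next
  case False
  have "\<not> [int (q * i) = r] (mod int (p * q))" for i
  proof
    assume "[int (q * i) = r] (mod int (p * q))"
    then have "[int (q * i) = r] (mod int q)"
      by (rule cong_dvd_modulus) simp
    then have "int q dvd int (q * i) \<longleftrightarrow> int q dvd r"
      by (rule cong_dvd_iff)
    then show False
      using False by simp
  qed
  then show ?thesis
    using False by (simp add: wsum_one_minus_monom_power weight_def)
qed

definition wsum_divisible :: "nat \<Rightarrow> nat \<Rightarrow> nat \<Rightarrow> int poly \<Rightarrow> bool" where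
  "wsum_divisible p m B G \<longleftrightarrow> (\<forall>l r. int p ^ B dvd wsum p m l r G)"

lemma wsum_divisible_0: "wsum_divisible p m 0 G"
  by (simp add: wsum_divisible_def)

lemma wsum_divisible_mult: "wsum_divisible p m B H \<Longrightarrow> wsum_divisible p m B (G * H)"
  unfolding wsum_divisible_def by (auto simp: wsum_mult intro!: dvd_sum dvd_mult)

lemma wsum_divisible_sum:
  "(\<And>i. i \<in> A \<Longrightarrow> wsum_divisible p m B (F i)) \<Longrightarrow> wsum_divisible p m B (\<Sum>i\<in>A. F i)"
  unfolding wsum_divisible_def by (auto simp: wsum_sum intro!: dvd_sum)

lemma wsum_divisible_smult:
  "wsum_divisible p m B H \<Longrightarrow> int p ^ e dvd c \<Longrightarrow> wsum_divisible p m (e + B) (smult c H)"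
  unfolding wsum_divisible_def by (auto simp: wsum_smult power_add intro!: mult_dvd_mono)

lemma wsum_divisible_of_nat_mult:
  "wsum_divisible p m B H \<Longrightarrow> wsum_divisible p m (multiplicity (int p) (int c) + B) (of_nat c * H)"
  unfolding of_nat_poly by (simp add: wsum_divisible_smult multiplicity_dvd)

lemma wsum_divisible_one_minus_monom_power_mult:
  assumes "m > 0" "wsum_divisible p m B H"
  shows "wsum_divisible p m (K + vfact p K + B) ((1 - monom 1 m) ^ K * H)"
  unfolding wsum_divisible_def wsum_one_minus_monom_power_mult[OF assms(1)] power_add
proof (intro allI mult_dvd_mono)
  show "int p ^ K dvd (- int p) ^ K"
    by (simp add: power_minus')
  show "int p ^ vfact p K dvd falling_fact (int l) K" for l
    unfolding vfact_def falling_fact_of_nat by (simp add: multiplicity_dvd)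
  show "int p ^ B dvd wsum p m (l - K) r H" for l r
    using assms(2) by (simp add: wsum_divisible_def)
qed

lemma power_mult_add_eq_sum:
  fixes u A B :: "'a :: comm_semiring_1"
  assumes "u ^ q = A + B"
  shows "u ^ (q * N + s) = (\<Sum>i\<le>N. of_nat (N choose i) * (B ^ i * u ^ s) * A ^ (N - i))"
proof -
  have "u ^ (q * N + s) = (u ^ q) ^ N * u ^ s"
    by (simp add: power_add power_mult)
  also have "\<dots> = (B + A) ^ N * u ^ s"
    using assms by (simp add: add.commute)
  also have "\<dots> = (\<Sum>i\<le>N. of_nat (N choose i) * B ^ i * A ^ (N - i)) * u ^ s"
    by (simp only: binomial_ring)
  finally show ?thesis
    by (simp add: sum_distrib_left sum_distrib_right algebra_simps)
qed

lemma wsum_divisible_binomial_term: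
  assumes "prime p" "i \<le> M" "wsum_divisible p p (vfact p i) H"
  shows "wsum_divisible p p (M + vfact p M)
    (of_nat (M choose i) * ((1 - monom 1 p) ^ (M - i) * smult (int p ^ i) (G * H)))"
proof -
  have "wsum_divisible p p (i + vfact p i) (smult (int p ^ i) (G * H))"
    using wsum_divisible_mult[OF assms(3)] by (rule wsum_divisible_smult) simp
  then have "wsum_divisible p p ((M - i) + vfact p (M - i) + (i + vfact p i))
      ((1 - monom 1 p) ^ (M - i) * smult (int p ^ i) (G * H))"
    by (rule wsum_divisible_one_minus_monom_power_mult[OF prime_gt_0_nat[OF assms(1)]])
  then have "wsum_divisible p p
      (multiplicity (int p) (int (M choose i)) + ((M - i) + vfact p (M - i) + (i + vfact p i)))
      (of_nat (M choose i) * ((1 - monom 1 p) ^ (M - i) * smult (int p ^ i) (G * H)))"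
    by (rule wsum_divisible_of_nat_mult)
  moreover have "M + vfact p M
      = multiplicity (int p) (int (M choose i)) + ((M - i) + vfact p (M - i) + (i + vfact p i))"
    using vfact_binomial[OF assms(1,2)] assms(2) by simp
  ultimately show ?thesis
    by simp
qed

text \<open>Induction on \<open>N\<close> via \<open>(1 - x) ^ p = (1 - x ^ p) + p (1 - x) w\<close>.\<close>

lemma wsum_divisible_one_minus_x_power:
  assumes "prime p"
  shows "wsum_divisible p p (vfact p N) ((1 - monom 1 1) ^ N)"
proof (induction N rule: less_induct)
  case (less N)
  define u :: "int poly" where "u = 1 - monom 1 1"
  define A :: "int poly" where "A = 1 - monom 1 p"
  define M where "M = N div p"
  show ?case
  proof (cases "M = 0")
    case True
    then show ?thesis
      using vfact_rec[OF assms, of N] by (simp add: M_def wsum_divisible_0)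
  next
    case False
    obtain w where "frobenius_error p = smult (int p) (u * w)"
      unfolding u_def by (rule frobenius_error_prime[OF assms])
    then have "u ^ p = A + smult (int p) (u * w)"
      by (simp add: frobenius_error_def u_def A_def)
    from power_mult_add_eq_sum[OF this, of M "N mod p"]
    have "u ^ N
        = (\<Sum>i\<le>M. of_nat (M choose i) * (smult (int p) (u * w) ^ i * u ^ (N mod p)) * A ^ (M - i))"
      unfolding M_def mult_div_mod_eq .
    also have "\<dots> = (\<Sum>i\<le>M. of_nat (M choose i) *
        (A ^ (M - i) * smult (int p ^ i) ((w ^ i * u ^ (N mod p)) * u ^ i)))"
      by (simp add: smult_power power_mult_distrib algebra_simps)
    finally have expand: "u ^ N = \<dots>" .
    have "N > 0"
      using False by (cases "N = 0") (auto simp: M_def)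
    then have "M < N"
      unfolding M_def using prime_gt_1_nat[OF assms] by (rule div_less_dividend[rotated])
    then have "wsum_divisible p p (vfact p i) (u ^ i)" if "i \<le> M" for i
      using less.IH[of i] that by (simp add: u_def)
    then have "wsum_divisible p p (M + vfact p M) (u ^ N)"
      unfolding expand A_def
      by (intro wsum_divisible_sum wsum_divisible_binomial_term[OF assms]) simp_all
    then show ?thesis
      using vfact_rec[OF assms, of N] by (simp add: M_def u_def)
  qed
qed

lemma wsum_one_minus_monom_power_dvd:
  assumes "prime p" "q > 0"
  shows "int p ^ vfact p K dvd wsum p (p * q) l r ((1 - monom 1 q) ^ K)"
  using wsum_divisible_one_minus_x_power[OF assms(1), of K] assms prime_gt_0_nat[OF assms(1)]
  by (auto simp: wsum_one_minus_monom_power_rescale wsum_divisible_def)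

lemma wsum_frobenius_error_term_dvd:
  assumes "prime p" "a < p ^ e" "b < p ^ e" "(a + b) mod p ^ e = s" "[int a = r] (mod int (p ^ e))"
  shows "int p ^ (vfact p i + tau p a b + vfact p K) dvd
    wsum p (p * p ^ e) l r (frobenius_error (p ^ e) ^ i * (1 - monom 1 1) ^ s * (1 - monom 1 (p ^ e)) ^ K)"
proof -
  let ?G = "frobenius_error (p ^ e) ^ i * (1 - monom 1 1) ^ s"
  have "int p ^ (vfact p i + tau p a b + vfact p K) dvd
      coeff ?G c * wsum p (p * p ^ e) l (r - int c) ((1 - monom 1 (p ^ e)) ^ K)" for c
  proof (cases "int (p ^ e) dvd r - int c")
    case True
    then have "[int c = int a] (mod int (p ^ e))"
      using assms(5) by (metis cong_iff_dvd_diff cong_sym cong_trans dvd_minus_iff minus_diff_eq)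
    then have "[c = a] (mod p ^ e)"
      by (simp only: cong_int_iff)
    then have "c mod p ^ e = a"
      using assms(2) by (simp add: cong_def)
    then show ?thesis
      unfolding power_add[of "int p" "vfact p i + tau p a b"]
      by (intro mult_dvd_mono coeff_frobenius_error_power_mult_dvd[OF assms(1-4)]
          wsum_one_minus_monom_power_dvd[OF assms(1)]) (simp_all add: prime_gt_0_nat[OF assms(1)])
  next
    case False
    then show ?thesis
      using prime_gt_0_nat[OF assms(1)] by (simp add: wsum_one_minus_monom_power_rescale)
  qed
  then show ?thesis
    unfolding wsum_mult by (intro dvd_sum)
qed

lemma wsum_one_minus_x_power_dvd:
  fixes r :: int and e n :: nat
  assumes "prime p"
  defines "a \<equiv> nat (r mod int (p ^ e))" and "b \<equiv> nat ((int n - r) mod int (p ^ e))"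
  shows "int p ^ (vfact p (n div p ^ e) + tau p a b) dvd wsum p (p * p ^ e) l r ((1 - monom 1 1) ^ n)"
proof -
  define q N s where "q = p ^ e" and "N = n div q" and "s = n mod q"
  have "q > 0"
    using prime_gt_0_nat[OF assms(1)] by (simp add: q_def)
  then have ab: "a < q" "b < q" "[int a = r] (mod int q)" "[int b = int n - r] (mod int q)"
    by (simp_all add: a_def b_def q_def cong_def nat_less_iff)
  then have "[int (a + b) = int n] (mod int q)"
    using cong_add by fastforce
  then have "[a + b = n] (mod q)"
    by (simp only: cong_int_iff)
  then have "(a + b) mod q = s"
    by (simp add: s_def cong_def)
  define summand where
    "summand i = frobenius_error q ^ i * (1 - monom 1 1) ^ s * (1 - monom 1 q) ^ (N - i)" for i
  have "(1 - monom 1 1) ^ q = (1 - monom 1 q) + frobenius_error q"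
    by (simp add: frobenius_error_def)
  from power_mult_add_eq_sum[OF this, of N s]
  have expand: "wsum p (p * q) l r ((1 - monom 1 1) ^ n)
      = (\<Sum>i\<le>N. int (N choose i) * wsum p (p * q) l r (summand i))"
    by (simp add: N_def s_def summand_def wsum_sum wsum_of_nat_mult mult.assoc)
  have "int p ^ (vfact p N + tau p a b) dvd int (N choose i) * wsum p (p * q) l r (summand i)"
    if i: "i \<le> N" for i
  proof -
    have "int p ^ (multiplicity (int p) (int (N choose i)) + (vfact p i + tau p a b + vfact p (N - i)))
        dvd int (N choose i) * wsum p (p * q) l r (summand i)"
      unfolding power_add[of "int p" "multiplicity _ _"] q_def summand_def
      using assms(1) ab \<open>(a + b) mod q = s\<close>
      by (intro mult_dvd_mono multiplicity_dvd wsum_frobenius_error_term_dvd) (simp_all add: q_def)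
    moreover have "vfact p N + tau p a b
        = multiplicity (int p) (int (N choose i)) + (vfact p i + tau p a b + vfact p (N - i))"
      using vfact_binomial[OF assms(1) i] by simp
    ultimately show ?thesis
      by (simp add: add_ac)
  qed
  then show ?thesis
    unfolding q_def[symmetric] N_def[symmetric] expand by (intro dvd_sum) simp
qed

lemma wsum_modulus_one_dvd:
  assumes "prime p"
  shows "int p ^ vfact p (p * n) dvd wsum p 1 l r ((1 - monom 1 1) ^ n)"
proof -
  have "wsum_divisible p 1 (n + vfact p n + 0) ((1 - monom 1 1) ^ n * 1)"
    by (intro wsum_divisible_one_minus_monom_power_mult wsum_divisible_0) simp
  moreover have "vfact p (p * n) = n + vfact p n"
    using vfact_rec[OF assms, of "p * n"] prime_gt_0_nat[OF assms] by simp
  ultimately show ?thesis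
    by (simp add: wsum_divisible_def)
qed

lemma T_eq_wsum:
  "T p \<alpha> l n r = of_int (wsum p (p ^ \<alpha>) l r ((1 - monom 1 1) ^ n)) / fact (flr p \<alpha> n)"
proof -
  define m where "m = p ^ \<alpha>"
  define S where "S = {k \<in> {0..n}. [int k = r] (mod int m)}"
  define f where "f k = (-1) ^ k * int (n choose k) * weight p m l r k" for k
  have "fact l * of_nat p ^ l *
        (\<Sum>k\<in>S. of_nat (n choose k) * (-1) ^ k * (of_int ((int k - r) div int m) gchoose l))
      = (\<Sum>k\<in>S. of_int (f k) :: rat)"
    unfolding sum_distrib_left
  proof (intro sum.cong refl)
    fix k
    assume "k \<in> S"
    let ?j = "(int k - r) div int m"
    have "fact l * of_nat p ^ l * (of_nat (n choose k) * (-1) ^ k * (of_int ?j gchoose l))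
        = of_nat p ^ l * of_nat (n choose k) * (-1) ^ k * (fact l * (of_int ?j gchoose l) :: rat)"
      by (simp only: mult_ac)
    also have "\<dots> = of_int (f k)"
      using \<open>k \<in> S\<close> by (simp add: fact_mult_gbinomial f_def weight_def S_def mult_ac)
    finally show "fact l * of_nat p ^ l * (of_nat (n choose k) * (-1) ^ k * (of_int ?j gchoose l))
        = (of_int (f k) :: rat)" .
  qed
  also have "\<dots> = of_int (wsum p m l r ((1 - monom 1 1) ^ n))"
    unfolding of_int_sum[symmetric] wsum_one_minus_monom_power f_def mult_1
    by (intro arg_cong[where f = of_int] sum.mono_neutral_left) (auto simp: S_def weight_def)
  finally show ?thesis
    unfolding T_def m_def[symmetric] S_def[symmetric] by (simp add: field_simps)
qed

lemma ord_rat_of_int_div: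
  assumes "prime p" "x \<noteq> 0" "y > 0"
  shows "ord_rat p (of_int x / of_int y) = int (multiplicity (int p) x) - int (multiplicity (int p) y)"
proof -
  obtain a b where ab: "quotient_of (of_int x / of_int y) = (a, b)"
    by (cases "quotient_of (of_int x / of_int y)")
  have "b > 0"
    using quotient_of_denom_pos[OF ab] .
  moreover have "(of_int x / of_int y :: rat) = of_int a / of_int b"
    using quotient_of_div[OF ab] .
  ultimately have "a * y = x * b"
    using assms(3) by (simp add: field_simps flip: of_int_mult)
  moreover have "a \<noteq> 0"
    using \<open>a * y = x * b\<close> assms \<open>b > 0\<close> by auto
  moreover have "prime_elem (int p)"
    using assms(1) by simp
  ultimately have "multiplicity (int p) a + multiplicity (int p) y
      = multiplicity (int p) x + multiplicity (int p) b"
    using assms(2,3) \<open>b > 0\<close> by (metis prime_elem_multiplicity_mult_distrib less_irrefl)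
  then show ?thesis
    unfolding ord_rat_def ab by simp
qed

lemma ord_rat_div_fact_ge:
  assumes "prime p" "int p ^ (vfact p F + t) dvd L"
  shows "of_int L / fact F = (0 :: rat) \<or> int t \<le> ord_rat p (of_int L / fact F)"
proof (cases "L = 0")
  case False
  have "vfact p F + t \<le> multiplicity (int p) L"
    using assms False prime_gt_1_nat[OF assms(1)] by (intro multiplicity_geI) auto
  moreover have "ord_rat p (of_int L / fact F) = int (multiplicity (int p) L) - int (vfact p F)"
    using ord_rat_of_int_div[OF assms(1) False, of "fact F"] by (simp add: vfact_def)
  ultimately show ?thesis
    by simp
qed simp

theorem theorem2p1:
  fixes p \<alpha> l n :: nat and r :: int
  assumes "prime p"
  shows "T p \<alpha> l n r = 0 \<or>
         int (tau p (fracres p \<alpha> r) (fracres p \<alpha> (int n - r))) \<le> ord_rat p (T p \<alpha> l n r)"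
proof -
  have "int p ^ (vfact p (flr p \<alpha> n) + tau p (fracres p \<alpha> r) (fracres p \<alpha> (int n - r)))
      dvd wsum p (p ^ \<alpha>) l r ((1 - monom 1 1) ^ n)"
  proof (cases "\<alpha> = 0")
    case True
    then show ?thesis
      using wsum_modulus_one_dvd[OF assms] by (simp add: flr_def fracres_def tau_0_0)
  next
    case False
    then have "p ^ \<alpha> = p * p ^ (\<alpha> - 1)"
      by (simp add: power_eq_if)
    then show ?thesis
      using wsum_one_minus_x_power_dvd[OF assms, where e = "\<alpha> - 1"] False
      by (simp add: flr_def fracres_def)
  qed
  then show ?thesis
    unfolding T_eq_wsum by (rule ord_rat_div_fact_ge[OF assms])
qed

end
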